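(* Let $\mathbb{F}$ be an algebraically closed field of characteristic $p>2$. Let $(V,[\cdot,\cdot]_V,\alpha_V,B_V)$ be an involutive quadratic Hom-Lie algebra over $\mathbb{F}$, $\mathscr{D}\in\mathrm{Der}_{\alpha_V}(V)$ such that $B_V$ is $\mathscr{D}$-invariant, and $x_0\in V$, $\lambda,\lambda_0\in\mathbb{F}$ with $\lambda\mathscr{D}+\mathrm{ad}_V(x_0)=\mathscr{D}$, $\alpha_V(\mathscr{D}(x_0))=-\mathscr{D}(x_0)$, $\alpha_V\circ\mathscr{D}^2-\mathscr{D}^2\circ\alpha_V=\mathrm{ad}_V(\mathscr{D}(x_0))$. Let $L=\mathbb{F}e^*\oplus V\oplus\mathbb{F}e$ with the skew-symmetric bilinear bracket $[x,y]=[x,y]_V+B_V(\mathscr{D}(x),y)e$, $[e^*,x]=-[x,e^*]=\mathscr{D}(x)$ ($x,y\in V$), $[e^*,e^*]=0$, $[e,z]=[z,e]=0$ ($z\in L$), and twist $\alpha(x)=\alpha_V(x)+B_V(x_0,x)e$, $\alpha(e^* )=\lambda e^*+x_0+\lambda_0e$, $\alpha(e)=\lambda e$. Then for all $u,v\in V$ and $1\le i\le p-1$, $s_i^L(u,v)=s_i^V(u,v)+\eta_i^V(u,v)e$.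
   Context: Hom-Lie algebra: $(\mathfrak g,[\cdot,\cdot],\alpha)$ with $[x,y]=-[y,x]$, $[\alpha(x),[y,z]]+[\alpha(y),[z,x]]+[\alpha(z),[x,y]]=0$, $\alpha([x,y])=[\alpha x,\alpha y]$; involutive: $\alpha^2=\mathrm{id}$; quadratic: symmetric nondegenerate bilinear $B$ with $B([x,y],z)=B(x,[y,z])$ and $B(\alpha x,y)=B(x,\alpha y)$. $\mathrm{Der}_{\alpha_V}(V)$: linear $\mathscr{D}$ with $\mathscr{D}\alpha_V=\alpha_V\mathscr{D}$, $\mathscr{D}[x,y]_V=[\mathscr{D}x,\alpha_Vy]_V+[\alpha_Vx,\mathscr{D}y]_V$. For $p>2$, $B_V$ is $\mathscr{D}$-invariant if $B_V(\mathscr{D}x,y)+B_V(x,\mathscr{D}y)=0$. For a Hom-Lie algebra $\mathfrak g$ with twist $\alpha$, the elements $s_i^{\mathfrak g}(x,y)$ ($1\le i\le p-1$) are defined by the polynomial identity in $k\in\mathbb{F}$: $\mathrm{ad}(\alpha^{p-2}(kx+y))\circ\mathrm{ad}(\alpha^{p-3}(kx+y))\circ\cdots\circ\mathrm{ad}(kx+y)(x)=\sum_{i=1}^{p-1}is_i^{\mathfrak g}(x,y)k^{i-1}$ (here $\mathrm{ad}(z)=[z,\cdot]$; $s_i^L$ uses $L$'s bracket and $\alpha$, $s_i^V$ uses $[\cdot,\cdot]_V,\alpha_V$). The scalars $\eta_i^V(u,v)$ are defined by $B_V\big(\mathscr{D}(\alpha_V^{p-2}(ku+v)),\mathrm{ad}_V(\alpha_V^{p-3}(ku+v))\circ\cdots\circ\mathrm{ad}_V(ku+v)(u)\big)=\sum_{i=1}^{p-1}i\eta_i^V(u,v)k^{i-1}$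 for all $k\in\mathbb{F}$. *)

theory Defs
  imports Main "HOL-Computational_Algebra.Polynomial" "HOL-Library.Product_Plus"
begin

fun hom_chain :: "('a \<Rightarrow> 'a \<Rightarrow> 'a) \<Rightarrow> ('a \<Rightarrow> 'a) \<Rightarrow> 'a \<Rightarrow> 'a \<Rightarrow> nat \<Rightarrow> 'a" where
  "hom_chain br al z x 0 = x"
| "hom_chain br al z x (Suc n) = br ((al ^^ n) z) (hom_chain br al z x n)"

definition poly_coeffs :: "('f::field \<Rightarrow> 'b::comm_monoid_add \<Rightarrow> 'b) \<Rightarrow> nat \<Rightarrow> ('f \<Rightarrow> 'b) \<Rightarrow> nat \<Rightarrow> 'b" where
  "poly_coeffs scale p F = (THE c. (\<forall>i. i \<notin> {1..p-1} \<longrightarrow> c i = 0) \<and>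
      (\<forall>k. F k = (\<Sum>i=1..p-1. scale (of_nat i * k ^ (i - 1)) (c i))))"

definition hom_s :: "('f::field \<Rightarrow> 'a::comm_monoid_add \<Rightarrow> 'a) \<Rightarrow> ('a \<Rightarrow> 'a \<Rightarrow> 'a) \<Rightarrow> ('a \<Rightarrow> 'a)
    \<Rightarrow> nat \<Rightarrow> 'a \<Rightarrow> 'a \<Rightarrow> nat \<Rightarrow> 'a" where
  "hom_s scale br al p x y = poly_coeffs scale p (\<lambda>k. hom_chain br al (scale k x + y) x (p - 1))"

definition hom_eta :: "('f::field \<Rightarrow> 'a::comm_monoid_add \<Rightarrow> 'a) \<Rightarrow> ('a \<Rightarrow> 'a \<Rightarrow> 'a) \<Rightarrow> ('a \<Rightarrow> 'a)
    \<Rightarrow> ('a \<Rightarrow> 'a \<Rightarrow> 'f) \<Rightarrow> ('a \<Rightarrow> 'a) \<Rightarrow> nat \<Rightarrow> 'a \<Rightarrow> 'a \<Rightarrow> nat \<Rightarrow> 'f" where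
  "hom_eta scale br al B D p u v = poly_coeffs (*) p
     (\<lambda>k. B (D ((al ^^ (p - 2)) (scale k u + v))) (hom_chain br al (scale k u + v) u (p - 2)))"

definition bilinear_map :: "('f::field \<Rightarrow> 'a::ab_group_add \<Rightarrow> 'a) \<Rightarrow> ('f \<Rightarrow> 'b::ab_group_add \<Rightarrow> 'b)
    \<Rightarrow> ('a \<Rightarrow> 'a \<Rightarrow> 'b) \<Rightarrow> bool" where
  "bilinear_map s1 s2 f \<longleftrightarrow> (\<forall>x. Vector_Spaces.linear s1 s2 (f x)) \<and> (\<forall>y. Vector_Spaces.linear s1 s2 (\<lambda>x. f x y))"

definition hom_lie_algebra :: "('f::field \<Rightarrow> 'a::ab_group_add \<Rightarrow> 'a) \<Rightarrow> ('a \<Rightarrow> 'a \<Rightarrow> 'a) \<Rightarrow> ('a \<Rightarrow> 'a) \<Rightarrow> bool" where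
  "hom_lie_algebra scale br al \<longleftrightarrow> vector_space scale \<and> bilinear_map scale scale br \<and> Vector_Spaces.linear scale scale al \<and>
     (\<forall>x y. br x y = - br y x) \<and>
     (\<forall>x y z. br (al x) (br y z) + br (al y) (br z x) + br (al z) (br x y) = 0) \<and>
     (\<forall>x y. al (br x y) = br (al x) (al y))"

definition involutive_quadratic_hom_lie :: "('f::field \<Rightarrow> 'a::ab_group_add \<Rightarrow> 'a) \<Rightarrow> ('a \<Rightarrow> 'a \<Rightarrow> 'a)
    \<Rightarrow> ('a \<Rightarrow> 'a) \<Rightarrow> ('a \<Rightarrow> 'a \<Rightarrow> 'f) \<Rightarrow> bool" where
  "involutive_quadratic_hom_lie scale br al B \<longleftrightarrow> hom_lie_algebra scale br al \<and>
     (\<forall>x. al (al x) = x) \<and>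
     bilinear_map scale (*) B \<and> (\<forall>x y. B x y = B y x) \<and>
     (\<forall>x. (\<forall>y. B x y = 0) \<longrightarrow> x = 0) \<and>
     (\<forall>x y z. B (br x y) z = B x (br y z)) \<and>
     (\<forall>x y. B (al x) y = B x (al y))"

definition hom_der :: "('f::field \<Rightarrow> 'a::ab_group_add \<Rightarrow> 'a) \<Rightarrow> ('a \<Rightarrow> 'a \<Rightarrow> 'a) \<Rightarrow> ('a \<Rightarrow> 'a) \<Rightarrow> ('a \<Rightarrow> 'a) set" where
  "hom_der scale br al = {D. Vector_Spaces.linear scale scale D \<and> (\<forall>x. D (al x) = al (D x)) \<and>
     (\<forall>x y. D (br x y) = br (D x) (al y) + br (al x) (D y))}"

(* L = F e* + V + F e, encoded as triples (a, x, b) = a e* + x + b e *)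
definition L_scale :: "('f::field \<Rightarrow> 'v \<Rightarrow> 'v) \<Rightarrow> 'f \<Rightarrow> 'f \<times> 'v \<times> 'f \<Rightarrow> 'f \<times> 'v \<times> 'f" where
  "L_scale smul c w = (case w of (a, x, b) \<Rightarrow> (c * a, smul c x, c * b))"

definition L_br :: "('f::field \<Rightarrow> 'v::ab_group_add \<Rightarrow> 'v) \<Rightarrow> ('v \<Rightarrow> 'v \<Rightarrow> 'v) \<Rightarrow> ('v \<Rightarrow> 'v \<Rightarrow> 'f) \<Rightarrow> ('v \<Rightarrow> 'v)
    \<Rightarrow> 'f \<times> 'v \<times> 'f \<Rightarrow> 'f \<times> 'v \<times> 'f \<Rightarrow> 'f \<times> 'v \<times> 'f" where
  "L_br smul brV B D w w' = (case w of (a, x, b) \<Rightarrow> case w' of (a', x', b') \<Rightarrow>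
     (0, brV x x' + smul a (D x') - smul a' (D x), B (D x) x'))"

definition L_alpha :: "('f::field \<Rightarrow> 'v::ab_group_add \<Rightarrow> 'v) \<Rightarrow> ('v \<Rightarrow> 'v) \<Rightarrow> ('v \<Rightarrow> 'v \<Rightarrow> 'f) \<Rightarrow> 'v \<Rightarrow> 'f \<Rightarrow> 'f
    \<Rightarrow> 'f \<times> 'v \<times> 'f \<Rightarrow> 'f \<times> 'v \<times> 'f" where
  "L_alpha smul alV B x0 lam lam0 w = (case w of (a, x, b) \<Rightarrow>
     (lam * a, alV x + smul a x0, B x0 x + a * lam0 + lam * b))"

end

theory Submission
  imports Defs
begin

text \<open>
  In \<open>L\<close> the twisted powers of \<open>(0, z, 0)\<close> stay of the form \<open>(0, \<alpha>\<^sub>V\<^sup>n z, _)\<close>, and the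
  bracket of \<open>(0, x, _)\<close> with \<open>(0, y, _)\<close> is \<open>(0, [x, y]\<^sub>V, B\<^sub>V(\<D> x, y))\<close>. Hence the
  \<open>(p - 1)\<close>-fold chain in \<open>L\<close> built from \<open>k u + v\<close> and applied to \<open>u\<close> has the corresponding
  chain of \<open>V\<close> as its \<open>V\<close>-component and the integrand defining \<open>\<eta>\<^sup>V\<close> as its \<open>e\<close>-component.
  Both are polynomial functions of \<open>k\<close> of degree \<open>< p - 1\<close>: each bracket with a twist of
  \<open>k u + v\<close> raises the degree by one, except the first, since \<open>[u, u]\<^sub>V = 0\<close>. An algebraically
  closed field is infinite, so such a function has unique coefficients, and as \<open>1, \<dots>, p - 1\<close>
  are invertible in characteristic \<open>p\<close>, the \<open>s\<^sub>i\<close> are read off componentwise.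

  Only the Hom-Lie structure of \<open>V\<close>, bilinearity of \<open>B\<^sub>V\<close> and linearity of \<open>\<D>\<close> enter.
\<close>

lemma infinite_UNIV_alg_closed_field: "infinite (UNIV :: 'a::alg_closed_field set)"
proof
  assume fin: "finite (UNIV :: 'a set)"
  define q :: "'a poly" where "q = (\<Prod>a\<in>UNIV. [:-a, 1:])"
  have "degree q = card (UNIV :: 'a set)"
    unfolding q_def by (subst degree_prod_eq_sum_degree) auto
  moreover have "card (UNIV :: 'a set) > 0"
    using fin by (simp add: finite_UNIV_card_ge_0)
  ultimately have "degree (q + 1) > 0"
    by (simp add: degree_add_eq_left)
  then obtain x where "poly (q + 1) x = 0"
    using alg_closed_imp_poly_has_root by blast
  moreover have "poly q x = 0"
    unfolding q_def poly_prod using fin by (intro prod_zero) auto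
  ultimately show False by simp
qed

lemma of_nat_neq_0_below_CHAR:
  assumes "CHAR('a::semiring_1) = p" and "0 < j" and "j < p"
  shows "(of_nat j :: 'a) \<noteq> 0"
  using assms by (auto simp: of_nat_eq_0_iff_char_dvd dest: dvd_imp_le)

lemma field_poly_fun_eq_0_imp_coeff_eq_0:
  fixes d :: "nat \<Rightarrow> 'f::field"
  assumes "infinite (UNIV :: 'f set)" and "\<And>k. (\<Sum>j<n. d j * k ^ j) = 0" and "j < n"
  shows "d j = 0"
proof -
  define q where "q = (\<Sum>j<n. monom (d j) j)"
  have "poly q k = 0" for k
    using assms(2) by (simp add: q_def poly_sum poly_monom)
  then have "{k. poly q k = 0} = UNIV"
    by blast
  then have "q = 0"
    using poly_roots_finite[of q] assms(1) by auto
  moreover have "coeff q j = d j"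
    using assms(3) by (simp add: q_def coeff_sum coeff_monom)
  ultimately show ?thesis by simp
qed

definition is_poly_fun :: "('f::field \<Rightarrow> 'a::comm_monoid_add \<Rightarrow> 'a) \<Rightarrow> nat \<Rightarrow> ('f \<Rightarrow> 'a) \<Rightarrow> bool" where
  "is_poly_fun scale n F \<longleftrightarrow> (\<exists>a. \<forall>k. F k = (\<Sum>j<n. scale (k ^ j) (a j)))"

definition has_poly_coeffs :: "('f::field \<Rightarrow> 'a::comm_monoid_add \<Rightarrow> 'a) \<Rightarrow> nat \<Rightarrow> ('f \<Rightarrow> 'a) \<Rightarrow> (nat \<Rightarrow> 'a) \<Rightarrow> bool" where
  "has_poly_coeffs scale p F c \<longleftrightarrow> (\<forall>i. i \<notin> {1..p-1} \<longrightarrow> c i = 0) \<and>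
     (\<forall>k. F k = (\<Sum>i=1..p-1. scale (of_nat i * k ^ (i - 1)) (c i)))"

lemma poly_coeffs_THE: "poly_coeffs scale p F = (THE c. has_poly_coeffs scale p F c)"
  unfolding poly_coeffs_def has_poly_coeffs_def ..

lemma is_poly_funI: "(\<And>k. F k = (\<Sum>j<n. scale (k ^ j) (a j))) \<Longrightarrow> is_poly_fun scale n F"
  unfolding is_poly_fun_def by blast

context vector_space
begin

lemma poly_fun_eq_0_imp_coeff_eq_0:
  assumes "infinite (UNIV :: 'a set)" and "\<And>k. (\<Sum>j<n. scale (k ^ j) (d j)) = 0" and "j < n"
  shows "d j = 0"
proof -
  obtain C where "independent C" and "UNIV \<subseteq> span C"
    using basis_exists[of UNIV] by blast
  then have C: "independent C" "span C = UNIV"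
    by auto
  have "representation C (d j) c = 0" for c
  proof -
    interpret coord: Vector_Spaces.linear scale "(*)" "\<lambda>x. representation C x c"
      using linear_representation[OF C] .
    have "(\<Sum>j<n. representation C (d j) c * k ^ j) = representation C (\<Sum>j<n. scale (k ^ j) (d j)) c" for k
      by (simp add: coord.sum coord.scale mult.commute)
    then show ?thesis
      using field_poly_fun_eq_0_imp_coeff_eq_0[OF assms(1) _ assms(3), of "\<lambda>j. representation C (d j) c"]
        assms(2) by (simp add: representation_zero)
  qed
  then show ?thesis
    using sum_nonzero_representation_eq[OF C(1), of "d j"] C(2) by simp
qed

lemma poly_fun_coeffs_unique:
  assumes "infinite (UNIV :: 'a set)"
    and "\<And>k. (\<Sum>j<n. scale (k ^ j) (a j)) = (\<Sum>j<n. scale (k ^ j) (b j))" and "j < n"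
  shows "a j = b j"
proof -
  have "(\<Sum>j<n. scale (k ^ j) (a j - b j)) = 0" for k
    using assms(2)[of k] by (simp add: scale_right_diff_distrib sum_subtractf)
  then show ?thesis
    using poly_fun_eq_0_imp_coeff_eq_0[OF assms(1) _ assms(3), of "\<lambda>j. a j - b j"] by simp
qed

lemma sum_poly_coeffs_reindex:
  "(\<Sum>i=1..p-1. scale (of_nat i * k ^ (i - 1)) (c i))
    = (\<Sum>j<p-1. scale (k ^ j) (scale (of_nat (Suc j)) (c (Suc j))))"
  by (simp add: sum.atLeast1_atMost_eq scale_scale mult.commute del: of_nat_Suc)

lemma has_poly_coeffs_unique:
  assumes inf: "infinite (UNIV :: 'a set)"
    and nz: "\<And>j. 0 < j \<Longrightarrow> j < p \<Longrightarrow> (of_nat j :: 'a) \<noteq> 0"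
    and c: "has_poly_coeffs scale p F c" and c': "has_poly_coeffs scale p F c'"
  shows "c = c'"
proof
  fix i
  show "c i = c' i"
  proof (cases "i \<in> {1..p-1}")
    case True
    then obtain j where j: "i = Suc j" "j < p - 1"
      by (cases i) auto
    have "(\<Sum>j<p-1. scale (k ^ j) (scale (of_nat (Suc j)) (c (Suc j))))
        = (\<Sum>j<p-1. scale (k ^ j) (scale (of_nat (Suc j)) (c' (Suc j))))" for k
      using c c' unfolding has_poly_coeffs_def sum_poly_coeffs_reindex by metis
    then have "scale (of_nat (Suc j)) (c (Suc j)) = scale (of_nat (Suc j)) (c' (Suc j))"
      by (rule poly_fun_coeffs_unique[OF inf _ j(2)])
    then show ?thesis
      using nz[of "Suc j"] j by (simp del: of_nat_Suc)
  next
    case False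
    then show ?thesis
      using c c' by (simp add: has_poly_coeffs_def)
  qed
qed

lemma poly_coeffs_eq:
  assumes inf: "infinite (UNIV :: 'a set)"
    and nz: "\<And>j. 0 < j \<Longrightarrow> j < p \<Longrightarrow> (of_nat j :: 'a) \<noteq> 0"
    and F: "\<And>k. F k = (\<Sum>j<p - 1. scale (k ^ j) (a j))"
    and i: "1 \<le> i" "i \<le> p - 1"
  shows "poly_coeffs scale p F i = scale (inverse (of_nat i)) (a (i - 1))"
proof -
  define c0 where "c0 i = (if i \<in> {1..p-1} then scale (inverse (of_nat i)) (a (i - 1)) else 0)" for i
  have "scale (of_nat (Suc j)) (c0 (Suc j)) = a j" if "j < p - 1" for j
    using that nz[of "Suc j"] by (simp add: c0_def scale_scale del: of_nat_Suc)
  then have "F k = (\<Sum>i=1..p-1. scale (of_nat i * k ^ (i - 1)) (c0 i))" for k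
    unfolding sum_poly_coeffs_reindex F by (intro sum.cong) auto
  then have "has_poly_coeffs scale p F c0"
    by (simp add: has_poly_coeffs_def c0_def)
  then have "poly_coeffs scale p F = c0"
    unfolding poly_coeffs_THE using has_poly_coeffs_unique[OF inf nz] by blast
  then show ?thesis
    using i by (simp add: c0_def)
qed

lemma is_poly_fun_Suc: "is_poly_fun scale n F \<Longrightarrow> is_poly_fun scale (Suc n) F"
proof -
  assume "is_poly_fun scale n F"
  then obtain a where "\<forall>k. F k = (\<Sum>j<n. scale (k ^ j) (a j))"
    unfolding is_poly_fun_def by blast
  then have "F k = (\<Sum>j<Suc n. scale (k ^ j) ((a(n := 0)) j))" for k
    by simp
  then show ?thesis
    by (rule is_poly_funI)
qed

lemma is_poly_fun_add:
  assumes "is_poly_fun scale n F" and "is_poly_fun scale n G"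
  shows "is_poly_fun scale n (\<lambda>k. F k + G k)"
proof -
  obtain a b where "\<forall>k. F k = (\<Sum>j<n. scale (k ^ j) (a j))" and "\<forall>k. G k = (\<Sum>j<n. scale (k ^ j) (b j))"
    using assms unfolding is_poly_fun_def by blast
  then have "F k + G k = (\<Sum>j<n. scale (k ^ j) (a j + b j))" for k
    by (simp add: scale_right_distrib sum.distrib)
  then show ?thesis
    by (rule is_poly_funI)
qed

lemma is_poly_fun_scale_var:
  assumes "is_poly_fun scale n F"
  shows "is_poly_fun scale (Suc n) (\<lambda>k. scale k (F k))"
proof -
  obtain a where "\<forall>k. F k = (\<Sum>j<n. scale (k ^ j) (a j))"
    using assms unfolding is_poly_fun_def by blast
  then have "scale k (F k) = (\<Sum>j<Suc n. scale (k ^ j) (case_nat 0 a j))" for k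
    unfolding sum.lessThan_Suc_shift by (simp add: scale_sum_right)
  then show ?thesis
    by (rule is_poly_funI)
qed

end

lemma is_poly_fun_linear_image:
  assumes "Vector_Spaces.linear s1 s2 g" and "is_poly_fun s1 n F"
  shows "is_poly_fun s2 n (\<lambda>k. g (F k))"
proof -
  interpret g: Vector_Spaces.linear s1 s2 g by fact
  obtain a where "\<forall>k. F k = (\<Sum>j<n. s1 (k ^ j) (a j))"
    using assms(2) unfolding is_poly_fun_def by blast
  then have "g (F k) = (\<Sum>j<n. s2 (k ^ j) (g (a j)))" for k
    by (simp add: g.sum g.scale)
  then show ?thesis
    by (rule is_poly_funI)
qed

lemma is_poly_fun_bilinear_affine:
  assumes bl: "bilinear_map s1 s2 f" and G: "is_poly_fun s1 m G"
  shows "is_poly_fun s2 (Suc m) (\<lambda>k. f (s1 k x + y) (G k))"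
proof -
  have left: "Vector_Spaces.linear s1 s2 (\<lambda>x. f x z)" and right: "Vector_Spaces.linear s1 s2 (f z)" for z
    using bl unfolding bilinear_map_def by blast+
  interpret vs2: vector_space s2
    using right[of x] by (simp add: Vector_Spaces.linear_iff)
  have "(\<lambda>k. f (s1 k x + y) (G k)) = (\<lambda>k. s2 k (f x (G k)) + f y (G k))"
    using left by (simp add: Vector_Spaces.linear_iff)
  moreover have "is_poly_fun s2 (Suc m) (\<lambda>k. s2 k (f x (G k)))"
    by (rule vs2.is_poly_fun_scale_var[OF is_poly_fun_linear_image[OF right G]])
  moreover have "is_poly_fun s2 (Suc m) (\<lambda>k. f y (G k))"
    by (rule vs2.is_poly_fun_Suc[OF is_poly_fun_linear_image[OF right G]])
  ultimately show ?thesis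
    by (simp add: vs2.is_poly_fun_add)
qed

lemma linear_funpow:
  assumes "Vector_Spaces.linear s s f"
  shows "Vector_Spaces.linear s s (f ^^ n)"
proof (induction n)
  case 0
  show ?case
    using vector_space.linear_id assms by (simp add: Vector_Spaces.linear_iff)
next
  case (Suc n)
  then show ?case
    unfolding funpow.simps(2) by (rule Vector_Spaces.linear_compose[OF _ assms])
qed

lemma hom_lie_algebra_bracket_self:
  fixes s :: "'f::field \<Rightarrow> 'a::ab_group_add \<Rightarrow> 'a"
  assumes "hom_lie_algebra s br al" and "(2::'f) \<noteq> 0"
  shows "br x x = 0"
proof -
  have "vector_space s" and skew: "br x x = - br x x"
    using assms(1) unfolding hom_lie_algebra_def by blast+
  interpret vector_space s by fact
  have "s 2 (br x x) = br x x + br x x"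
    by (metis one_add_one scale_left_distrib scale_one)
  also have "\<dots> = 0"
    using skew by (metis add.right_inverse)
  finally show ?thesis
    using assms(2) by simp
qed

lemma hom_chain_is_poly_fun:
  assumes hl: "hom_lie_algebra s br al" and "br u u = 0" and "1 \<le> n"
  shows "is_poly_fun s n (\<lambda>k. hom_chain br al (s k u + v) u n)"
  using \<open>1 \<le> n\<close>
proof (induction n rule: nat_induct_at_least)
  case base
  have "bilinear_map s s br" and "vector_space s"
    using hl unfolding hom_lie_algebra_def by blast+
  interpret vector_space s by fact
  have "hom_chain br al (s k u + v) u 1 = (\<Sum>j<1. s (k ^ j) (br v u))" for k
    using \<open>bilinear_map s s br\<close> \<open>br u u = 0\<close> by (simp add: bilinear_map_def Vector_Spaces.linear_iff)
  then show ?case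
    by (rule is_poly_funI)
next
  case (Suc n)
  have bl: "bilinear_map s s br" and "Vector_Spaces.linear s s al"
    using hl unfolding hom_lie_algebra_def by blast+
  from this(2) have "Vector_Spaces.linear s s (al ^^ n)"
    by (rule linear_funpow)
  then have "hom_chain br al (s k u + v) u (Suc n)
      = br (s k ((al ^^ n) u) + (al ^^ n) v) (hom_chain br al (s k u + v) u n)" for k
    by (simp add: Vector_Spaces.linear_iff)
  then show ?case
    using is_poly_fun_bilinear_affine[OF bl Suc.IH] by simp
qed

lemma vector_space_mult: "vector_space ((*) :: 'f::field \<Rightarrow> 'f \<Rightarrow> 'f)"
  by unfold_locales (simp_all add: algebra_simps)

lemma L_scale_simp [simp]: "L_scale smul c (a, x, b) = (c * a, smul c x, c * b)"
  by (simp add: L_scale_def)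

lemma vector_space_L_scale:
  assumes "vector_space (smul :: 'f::field \<Rightarrow> 'v::ab_group_add \<Rightarrow> 'v)"
  shows "vector_space (L_scale smul)"
proof -
  interpret vector_space smul by fact
  show ?thesis
    by unfold_locales (auto simp: algebra_simps scale_right_distrib scale_left_distrib)
qed

lemma L_alpha_funpow_V:
  assumes "vector_space smul"
  shows "\<exists>b'. (L_alpha smul alV B x0 lam lam0 ^^ n) (0, z, b) = (0, (alV ^^ n) z, b')"
proof (induction n)
  case (Suc n)
  interpret vector_space smul by fact
  from Suc obtain b' where b': "(L_alpha smul alV B x0 lam lam0 ^^ n) (0, z, b) = (0, (alV ^^ n) z, b')"
    by blast
  show ?case
    by (simp only: funpow.simps(2) comp_apply b') (simp add: L_alpha_def)
qed simp

lemma hom_chain_L_V: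
  assumes "vector_space smul"
  shows "hom_chain (L_br smul brV B D) (L_alpha smul alV B x0 lam lam0) (0, z, 0) (0, u, 0) (Suc n)
     = (0, hom_chain brV alV z u (Suc n), B (D ((alV ^^ n) z)) (hom_chain brV alV z u n))"
proof (induction n)
  case 0
  interpret vector_space smul by fact
  show ?case
    by (simp add: L_br_def)
next
  case (Suc n)
  interpret vector_space smul by fact
  obtain b' where "(L_alpha smul alV B x0 lam lam0 ^^ Suc n) (0, z, 0) = (0, (alV ^^ Suc n) z, b')"
    using L_alpha_funpow_V[OF assms] by blast
  then show ?case
    by (simp only: hom_chain.simps(2)[of _ _ _ _ "Suc n"] Suc) (simp add: L_br_def del: funpow.simps)
qed

lemma poly_coeffs_L_scale:
  fixes smul :: "'f::field \<Rightarrow> 'v::ab_group_add \<Rightarrow> 'v"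
  assumes vs: "vector_space smul" and inf: "infinite (UNIV :: 'f set)"
    and nz: "\<And>j. 0 < j \<Longrightarrow> j < p \<Longrightarrow> (of_nat j :: 'f) \<noteq> 0"
    and "is_poly_fun smul (p - 1) X" and "is_poly_fun (*) (p - 1) Y"
    and i: "1 \<le> i" "i \<le> p - 1"
  shows "poly_coeffs (L_scale smul) p (\<lambda>k. (0, X k, Y k)) i
       = (0, poly_coeffs smul p X i, poly_coeffs (*) p Y i)"
proof -
  obtain a b where a: "\<And>k. X k = (\<Sum>j<p-1. smul (k ^ j) (a j))" and b: "\<And>k. Y k = (\<Sum>j<p-1. k ^ j * b j)"
    using assms(4,5) unfolding is_poly_fun_def by blast
  have L: "(0, X k, Y k) = (\<Sum>j<p-1. L_scale smul (k ^ j) (0, a j, b j))" for k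
    by (simp add: a b prod_eq_iff fst_sum snd_sum)
  have "poly_coeffs (L_scale smul) p (\<lambda>k. (0, X k, Y k)) i
      = L_scale smul (inverse (of_nat i)) (0, a (i - 1), b (i - 1))"
    using vector_space.poly_coeffs_eq[OF vector_space_L_scale[OF vs] inf nz L i] by simp
  moreover have "poly_coeffs smul p X i = smul (inverse (of_nat i)) (a (i - 1))"
    by (rule vector_space.poly_coeffs_eq[OF vs inf nz a i])
  moreover have "poly_coeffs (*) p Y i = inverse (of_nat i) * b (i - 1)"
    by (rule vector_space.poly_coeffs_eq[OF vector_space_mult inf nz b i])
  ultimately show ?thesis
    by simp
qed

theorem lemma4p3:
  fixes smul :: "'f::alg_closed_field \<Rightarrow> 'v::ab_group_add \<Rightarrow> 'v"
    and brV :: "'v \<Rightarrow> 'v \<Rightarrow> 'v" and alV D :: "'v \<Rightarrow> 'v" and B :: "'v \<Rightarrow> 'v \<Rightarrow> 'f"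
    and x0 u v :: 'v and lam lam0 :: 'f and p i :: nat
  assumes "CHAR('f) = p" and "p > 2"
    and "involutive_quadratic_hom_lie smul brV alV B"
    and "D \<in> hom_der smul brV alV"
    and "\<forall>x y. B (D x) y + B x (D y) = 0"
    and "\<forall>x. smul lam (D x) + brV x0 x = D x"
    and "alV (D x0) = - D x0"
    and "\<forall>x. alV (D (D x)) - D (D (alV x)) = brV (D x0) x"
    and "1 \<le> i" and "i \<le> p - 1"
  shows "hom_s (L_scale smul) (L_br smul brV B D) (L_alpha smul alV B x0 lam lam0) p (0, u, 0) (0, v, 0) i
         = (0, hom_s smul brV alV p u v i, hom_eta smul brV alV B D p u v i)"
proof -
  have hl: "hom_lie_algebra smul brV alV" and bl: "bilinear_map smul (*) B"
    using assms(3) unfolding involutive_quadratic_hom_lie_def by blast+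
  then have vs: "vector_space smul" and al: "Vector_Spaces.linear smul smul alV"
    unfolding hom_lie_algebra_def by blast+
  have "Vector_Spaces.linear smul smul D"
    using assms(4) unfolding hom_der_def by blast
  then have D_al: "Vector_Spaces.linear smul smul (D \<circ> alV ^^ (p - 2))"
    by (rule Vector_Spaces.linear_compose[OF linear_funpow[OF al]])
  have nz: "\<And>j. 0 < j \<Longrightarrow> j < p \<Longrightarrow> (of_nat j :: 'f) \<noteq> 0"
    using of_nat_neq_0_below_CHAR[OF assms(1)] .
  have p: "p - 1 = Suc (p - 2)" "1 \<le> p - 2"
    using assms(2) by auto
  have "brV u u = 0"
    using hom_lie_algebra_bracket_self[OF hl] nz[of 2] assms(2) by simp
  then have V: "is_poly_fun smul n (\<lambda>k. hom_chain brV alV (smul k u + v) u n)" if "1 \<le> n" for n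
    using hom_chain_is_poly_fun[OF hl _ that] by blast
  have E: "is_poly_fun (*) (p - 1)
      (\<lambda>k. B (D ((alV ^^ (p - 2)) (smul k u + v))) (hom_chain brV alV (smul k u + v) u (p - 2)))"
    unfolding p(1) using is_poly_fun_bilinear_affine[OF bl V[OF p(2)]] D_al
    by (simp add: Vector_Spaces.linear_iff)
  have "hom_chain (L_br smul brV B D) (L_alpha smul alV B x0 lam lam0) (L_scale smul k (0, u, 0) + (0, v, 0))
      (0, u, 0) (p - 1) = (0, hom_chain brV alV (smul k u + v) u (p - 1),
      B (D ((alV ^^ (p - 2)) (smul k u + v))) (hom_chain brV alV (smul k u + v) u (p - 2)))" for k
    unfolding p(1) by (simp add: hom_chain_L_V[OF vs] del: hom_chain.simps)
  then show ?thesis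
    unfolding hom_s_def hom_eta_def
    using poly_coeffs_L_scale[OF vs infinite_UNIV_alg_closed_field nz V E assms(9,10)] p by simp
qed

end
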